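(* Let $d,r$ be integers with $d\ge1$ and $1\le r\le\binom{m+d}{d}-r_d$. Then $d_r(\mathrm{PRM}_q(d,m))=\mathsf{p}_m-\overline{e}_r(d,m)$.
   Context: $q$ is a prime power, $\mathbb{F}_q$ the finite field with $q$ elements, $m$ a positive integer, $\mathsf{p}_m=q^m+\dots+q+1=|\mathbb{P}^m(\mathbb{F}_q)|$. A monomial $\mu\neq1$ in $x_0,\dots,x_m$ written $x_0^{a_0}\cdots x_k^{a_k}$ with $a_k>0$ is projectively reduced if $a_0,\dots,a_{k-1}\le q-1$; $1$ is projectively reduced; a polynomial is projectively reduced if it is a linear combination of projectively reduced monomials. $r_d$ is the dimension of the degree-$d$ component of the ideal generated by $\{x_i^qx_j-x_ix_j^q:0\le i<j\le m\}$; $\binom{m+d}{d}-r_d=\dim\mathrm{PRM}_q(d,m)$. $\overline{e}_r(d,m)$ is the maximum number of points of $\mathbb{P}^m(\mathbb{F}_q)$ at which $G_1,\dots,G_r$ all vanish, over families of $r$ linearly independent projectively reduced homogeneous polynomials of degree $d$. Fix representatives $P_1,\dots,P_{\mathsf{p}_m}\in\mathbb{F}_q^{m+1}$ of the points of $\mathbb{P}^m(\mathbb{F}_q)$; $\mathrm{PRM}_q(d,m)$ is the image of the homogeneous degree-$d$ polynomials under $F\mapsto(F(P_1),\dots,F(P_{\mathsf{p}_m}))$. For a linear code $C$ and $1\le r\le\dim C$, $d_r(C)=\min\{|\mathrm{Supp}(D)|:D\subseteq C\text{ subspace},\dim D=r\}$, with $\mathrm{Supp}(D)$ the set of coordinates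 where some element of $D$ is nonzero. *)

theory Defs
  imports Complex_Main "HOL-Library.Function_Algebras" "HOL-Library.Cardinality"
begin

definition fscale :: "'a::field \<Rightarrow> ('b \<Rightarrow> 'a) \<Rightarrow> ('b \<Rightarrow> 'a)" where
  "fscale c f = (\<lambda>x. c * f x)"

lemma vector_space_fscale: "vector_space (fscale :: 'a::field \<Rightarrow> ('b \<Rightarrow> 'a) \<Rightarrow> _)"
  unfolding vector_space_def by (auto simp: fscale_def fun_eq_iff algebra_simps)

text \<open>Exponent vectors are functions nat => nat; a polynomial is its coefficient
  function (exponent vector => coefficient).\<close>

definition monos_deg :: "nat \<Rightarrow> nat \<Rightarrow> (nat \<Rightarrow> nat) set" where
  "monos_deg m d = {a. (\<forall>i>m. a i = 0) \<and> (\<Sum>i\<le>m. a i) = d}"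

definition hom_polys :: "nat \<Rightarrow> nat \<Rightarrow> ((nat \<Rightarrow> nat) \<Rightarrow> 'a::field) set" where
  "hom_polys m d = {F. \<forall>a. F a \<noteq> 0 \<longrightarrow> a \<in> monos_deg m d}"

definition eval_poly :: "nat \<Rightarrow> ((nat \<Rightarrow> nat) \<Rightarrow> 'a::field) \<Rightarrow> (nat \<Rightarrow> 'a) \<Rightarrow> 'a" where
  "eval_poly m F v = (\<Sum>a\<in>{a. F a \<noteq> 0}. F a * (\<Prod>i\<le>m. v i ^ a i))"

definition proj_reduced_mono :: "nat \<Rightarrow> nat \<Rightarrow> (nat \<Rightarrow> nat) \<Rightarrow> bool" where
  "proj_reduced_mono q m a \<longleftrightarrow> (a = (\<lambda>_. 0)) \<or>
     (\<exists>k\<le>m. a k > 0 \<and> (\<forall>i>k. a i = 0) \<and> (\<forall>i<k. a i \<le> q - 1))"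

definition PR_hom_polys :: "nat \<Rightarrow> nat \<Rightarrow> ((nat \<Rightarrow> nat) \<Rightarrow> 'a::{finite,field}) set" where
  "PR_hom_polys m d = {F \<in> hom_polys m d. \<forall>a. F a \<noteq> 0 \<longrightarrow> proj_reduced_mono CARD('a) m a}"

definition mono_poly :: "(nat \<Rightarrow> nat) \<Rightarrow> ((nat \<Rightarrow> nat) \<Rightarrow> 'a::field)" where
  "mono_poly a = (\<lambda>b. if b = a then 1 else 0)"

definition unit_exp :: "nat \<Rightarrow> nat \<Rightarrow> nat" where
  "unit_exp i = (\<lambda>k. if k = i then 1 else 0)"

text \<open>The polynomial x^b * (x_i^q x_j - x_i x_j^q).\<close>
definition gen_mult :: "nat \<Rightarrow> (nat \<Rightarrow> nat) \<Rightarrow> nat \<Rightarrow> nat \<Rightarrow> ((nat \<Rightarrow> nat) \<Rightarrow> 'a::field)" where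
  "gen_mult q b i j =
     mono_poly (\<lambda>k. b k + q * unit_exp i k + unit_exp j k)
     - mono_poly (\<lambda>k. b k + unit_exp i k + q * unit_exp j k)"

text \<open>Degree-d component of the ideal generated by the homogeneous polynomials
  x_i^q x_j - x_i x_j^q (0 <= i < j <= m): the span of their monomial multiples of degree d.\<close>
definition ideal_deg :: "nat \<Rightarrow> nat \<Rightarrow> ((nat \<Rightarrow> nat) \<Rightarrow> 'a::{finite,field}) set" where
  "ideal_deg m d = module.span fscale
     {gen_mult CARD('a) b i j | b i j. i < j \<and> j \<le> m \<and> CARD('a) + 1 \<le> d
                                   \<and> b \<in> monos_deg m (d - (CARD('a) + 1))}"

definition r_d :: "'a::{finite,field} itself \<Rightarrow> nat \<Rightarrow> nat \<Rightarrow> nat" where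
  "r_d TYPE('a) m d = vector_space.dim (fscale :: 'a \<Rightarrow> _) (ideal_deg m d :: ((nat \<Rightarrow> nat) \<Rightarrow> 'a) set)"

definition aff_vecs :: "nat \<Rightarrow> (nat \<Rightarrow> 'a::field) set" where
  "aff_vecs m = {v. \<forall>i>m. v i = 0}"

text \<open>The point of P^m spanned by a nonzero vector: the line through it.\<close>
definition proj_line :: "(nat \<Rightarrow> 'a::field) \<Rightarrow> (nat \<Rightarrow> 'a) set" where
  "proj_line v = {fscale c v | c. True}"

definition proj_points :: "nat \<Rightarrow> (nat \<Rightarrow> 'a::field) set set" where
  "proj_points m = {proj_line v | v. v \<in> aff_vecs m \<and> v \<noteq> 0}"

definition rep_system :: "nat \<Rightarrow> (nat \<Rightarrow> 'a::field) set \<Rightarrow> bool" where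
  "rep_system m R \<longleftrightarrow> R \<subseteq> aff_vecs m - {0} \<and> bij_betw proj_line R (proj_points m)"

definition p_m :: "nat \<Rightarrow> nat \<Rightarrow> nat" where
  "p_m q m = (\<Sum>i\<le>m. q ^ i)"

definition PRM :: "nat \<Rightarrow> nat \<Rightarrow> (nat \<Rightarrow> 'a::{finite,field}) set \<Rightarrow> ((nat \<Rightarrow> 'a) \<Rightarrow> 'a) set" where
  "PRM d m R = {(\<lambda>P. if P \<in> R then eval_poly m F P else 0) | F. F \<in> hom_polys m d}"

definition Supp :: "('b \<Rightarrow> 'a::zero) set \<Rightarrow> 'b set" where
  "Supp D = {x. \<exists>c\<in>D. c x \<noteq> 0}"

definition gen_hamming_weight :: "('b \<Rightarrow> 'a::field) set \<Rightarrow> nat \<Rightarrow> nat" where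
  "gen_hamming_weight C r = Min {card (Supp D) | D. D \<subseteq> C \<and> module.subspace fscale D
                                  \<and> vector_space.dim (fscale :: 'a \<Rightarrow> _) D = r}"

definition e_bar :: "'a::{finite,field} itself \<Rightarrow> nat \<Rightarrow> nat \<Rightarrow> nat \<Rightarrow> nat" where
  "e_bar TYPE('a) r d m = Max {card {L \<in> (proj_points m :: (nat \<Rightarrow> 'a) set set).
                                      \<forall>G\<in>Gs. \<forall>v\<in>L. eval_poly m G v = 0}
                               | Gs. Gs \<subseteq> (PR_hom_polys m d :: ((nat \<Rightarrow> nat) \<Rightarrow> 'a) set)
                                     \<and> card Gs = r \<and> \<not> module.dependent (fscale :: 'a \<Rightarrow> _) Gs}"

end

theory Submission
  imports Defs "HOL-Computational_Algebra.Polynomial" "HOL-Library.FuncSet"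
begin

text \<open>
  Evaluation at the representatives R is a linear map from the homogeneous polynomials of
  degree d onto PRM_q(d,m), and it kills the ideal generated by the x_i^q x_j - x_i x_j^q.
  Rewriting x_i^q x_k into x_i x_k^q for i < k shows that every homogeneous polynomial is
  congruent modulo the ideal to a projectively reduced one; hence the projectively reduced
  polynomials already map onto the code, and they span a space of dimension at least
  binom(m+d, d) - r_d. On them the map is injective: a projectively reduced polynomial vanishing
  on all of F_q^(m+1) is zero, by induction on m, splitting off the monomials containing x_m.
  So the r-dimensional subcodes D are exactly the images of the spans of r linearly independent
  projectively reduced G_1, ..., G_r, and Supp D consists of the points that are not common
  zeros of the G_i. Minimising |Supp D| = p_m - |Z(G_1, ..., G_r)| gives the formula.
\<close>

interpretation VS: vector_space "fscale :: 'a::field \<Rightarrow> ('b \<Rightarrow> 'a) \<Rightarrow> ('b \<Rightarrow> 'a)"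
  by (rule vector_space_fscale)

interpretation VP: vector_space_pair "fscale :: 'a::field \<Rightarrow> ('b \<Rightarrow> 'a) \<Rightarrow> ('b \<Rightarrow> 'a)"
  "fscale :: 'a::field \<Rightarrow> ('c \<Rightarrow> 'a) \<Rightarrow> ('c \<Rightarrow> 'a)"
  by unfold_locales

lemma fscale_apply [simp]: "fscale c f x = c * f x"
  by (simp add: fscale_def)

lemma sum_apply: "(sum f A) x = (\<Sum>a\<in>A. f a x)"
  by (induction A rule: infinite_finite_induct) auto

lemma add_mult_less_mult_add:
  fixes x y q :: nat
  assumes "y < x" "1 < q"
  shows "x + q * y < q * x + y"
proof -
  have "x - y < q * (x - y)"
    using assms by simp
  moreover have "q * y \<le> q * x"
    using assms(1) by simp
  ultimately show ?thesis
    using assms(1) by (simp add: diff_mult_distrib2)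
qed

lemma Min_diff_image_eq:
  fixes f :: "'b \<Rightarrow> nat"
  assumes "finite A" "A \<noteq> {}"
  shows "Min ((\<lambda>x. n - f x) ` A) = n - Max (f ` A)"
proof (rule Min_eqI)
  show "finite ((\<lambda>x. n - f x) ` A)"
    using assms(1) by simp
  show "n - Max (f ` A) \<le> y" if "y \<in> (\<lambda>x. n - f x) ` A" for y
    using that assms(1) by (auto intro: diff_le_mono2)
  have "Max (f ` A) \<in> f ` A"
    using assms by (intro Max_in) auto
  then obtain x where "x \<in> A" "f x = Max (f ` A)"
    by (rule imageE) simp
  then show "n - Max (f ` A) \<in> (\<lambda>x. n - f x) ` A"
    by (intro image_eqI[where x = x]) simp_all
qed

lemma obtain_last_nonzero:
  fixes a :: "nat \<Rightarrow> nat"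
  assumes "a \<noteq> (\<lambda>_. 0)" "\<forall>t>m. a t = 0"
  obtains k where "k \<le> m" "a k > 0" "\<forall>t>k. a t = 0"
proof -
  let ?K = "{t. a t \<noteq> 0}"
  have K: "?K \<subseteq> {..m}"
  proof
    fix t
    assume "t \<in> ?K"
    then show "t \<in> {..m}"
      using assms(2) by (cases "t \<le> m") auto
  qed
  then have fin: "finite ?K"
    by (rule finite_subset) simp
  moreover have "?K \<noteq> {}"
    using assms(1) by auto
  ultimately have Max: "Max ?K \<in> ?K"
    by (rule Max_in)
  show ?thesis
  proof (rule that)
    show "Max ?K \<le> m" "a (Max ?K) > 0"
      using K Max by auto
    show "\<forall>t>Max ?K. a t = 0"
      using Max_ge[OF fin] leD by blast
  qed
qed

context vector_space
begin

lemma dim_le_dim_if_subset_span: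
  assumes "V \<subseteq> span W" "finite W"
  shows "dim V \<le> dim W"
proof -
  obtain B where B: "B \<subseteq> W" "W \<subseteq> span B" "card B = dim W"
    by (metis basis_exists)
  have "V \<subseteq> span B"
    using assms(1) B(2) by (metis span_minimal subspace_span subset_trans)
  then have "dim V \<le> card B"
    using B(1) assms(2) by (intro dim_le_card) (auto intro: finite_subset)
  with B(3) show ?thesis
    by simp
qed

lemma dim_Un_le:
  assumes "finite A" "finite B"
  shows "dim (A \<union> B) \<le> dim A + dim B"
proof -
  obtain BA where BA: "BA \<subseteq> A" "A \<subseteq> span BA" "card BA = dim A"
    by (metis basis_exists)
  obtain BB where BB: "BB \<subseteq> B" "B \<subseteq> span BB" "card BB = dim B"
    by (metis basis_exists)
  have "A \<union> B \<subseteq> span (BA \<union> BB)"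
    using BA(2) BB(2) span_mono[of BA "BA \<union> BB"] span_mono[of BB "BA \<union> BB"] by blast
  then have "dim (A \<union> B) \<le> card (BA \<union> BB)"
    using BA(1) BB(1) assms by (intro dim_le_card) (auto intro: finite_subset)
  also have "\<dots> \<le> card BA + card BB"
    by (rule card_Un_le)
  finally show ?thesis
    using BA(3) BB(3) by simp
qed

end

context vector_space_pair
begin

lemma dim_image_eq_if_inj_on_span:
  assumes lf: "Vector_Spaces.linear s1 s2 f" and inj: "inj_on f (vs1.span S)"
  shows "vs2.dim (f ` S) = vs1.dim S"
proof -
  obtain B where B: "B \<subseteq> S" "vs1.independent B" "S \<subseteq> vs1.span B" "card B = vs1.dim S"
    by (rule vs1.basis_exists)
  have span_B: "vs1.span S = vs1.span B"
    using B(1,3) vs1.span_superset[of S] by (auto simp: vs1.span_eq)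
  have "vs2.dim (f ` S) = vs2.dim (f ` B)"
    using linear_span_image[OF lf] span_B by (metis vs2.dim_span)
  also have "\<dots> = card (f ` B)"
    using linear_independent_injective_image[OF lf B(2)] inj span_B
    by (simp add: vs2.dim_eq_card_independent)
  also have "\<dots> = card B"
    using inj B(1) vs1.span_superset by (meson card_image inj_on_subset subset_trans)
  finally show ?thesis
    using B(4) by simp
qed

end

lemma power_card_eq_self: "(x::'a::{finite,field}) ^ CARD('a) = x"
proof (cases "x = 0")
  case False
  let ?N = "UNIV - {0::'a}"
  have bij: "bij_betw (\<lambda>y. x * y) ?N ?N"
    using False by (auto simp: bij_betw_def inj_on_def intro!: image_eqI[where x="y / x" for y])
  have "x ^ card ?N * (\<Prod>y\<in>?N. y) = (\<Prod>y\<in>?N. x * y)"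
    by (simp add: prod.distrib)
  also have "\<dots> = (\<Prod>y\<in>?N. y)"
    using prod.reindex_bij_betw[OF bij, of "\<lambda>y. y"] by simp
  finally have "x ^ card ?N = 1"
    by simp
  moreover have "CARD('a) = Suc (card ?N)"
    by (simp add: card_Diff_singleton Suc_leI)
  ultimately show ?thesis
    by (simp only: power_Suc mult_1_right)
qed (simp add: zero_power)

lemma card_field_ge_2: "CARD('a::{finite,field}) \<ge> 2"
proof -
  have "card {0::'a, 1} \<le> CARD('a)"
    by (rule card_mono) auto
  then show ?thesis
    by simp
qed

lemma coeff_zero_if_vanishing:
  fixes c :: "nat \<Rightarrow> 'a::{finite,field}"
  assumes vanishing: "\<And>x. (\<Sum>e<CARD('a). c e * x ^ e) = 0" and "e < CARD('a)"
  shows "c e = 0"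
proof -
  define p where "p = (\<Sum>e<CARD('a). monom (c e) e)"
  have "p = 0"
  proof (rule ccontr)
    assume "p \<noteq> 0"
    then have "card {x. poly p x = 0} \<le> degree p"
      by (rule card_poly_roots_bound)
    moreover have "{x. poly p x = 0} = UNIV"
      using vanishing by (simp add: p_def poly_sum poly_monom)
    moreover have "degree p \<le> CARD('a) - 1"
      unfolding p_def by (rule degree_sum_le) (auto intro: order.trans[OF degree_monom_le])
    ultimately have "CARD('a) \<le> CARD('a) - 1"
      by (metis order.trans card_UNIV)
    with card_field_ge_2[where 'a='a] show False
      by linarith
  qed
  then have "coeff p e = 0"
    by simp
  then show ?thesis
    using assms(2) by (simp add: p_def coeff_sum coeff_monom)
qed

section \<open>Homogeneous polynomials and their evaluation\<close>

lemma finite_monos_deg: "finite (monos_deg m d)"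
proof (rule finite_subset)
  show "monos_deg m d \<subseteq> {a. \<forall>i. (i \<in> {..m} \<longrightarrow> a i \<in> {..d}) \<and> (i \<notin> {..m} \<longrightarrow> a i = 0)}"
  proof (intro subsetI CollectI allI conjI impI)
    fix a i assume a: "a \<in> monos_deg m d"
    show "a i = 0" if "i \<notin> {..m}"
      using a that by (simp add: monos_deg_def)
    assume "i \<in> {..m}"
    then have "a i \<le> (\<Sum>j\<le>m. a j)"
      by (intro member_le_sum) auto
    with a show "a i \<in> {..d}"
      by (simp add: monos_deg_def)
  qed
qed (intro finite_set_of_finite_funs; simp)

lemma card_monos_deg: "card (monos_deg m d) = (m + d choose d)"
proof -
  have "bij_betw (\<lambda>a. map a [0..<Suc m]) (monos_deg m d) {l. length l = Suc m \<and> sum_list l = d}"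
  proof (rule bij_betw_byWitness[where f' = "\<lambda>l i. if i \<le> m then l ! i else 0"])
    show "\<forall>a\<in>monos_deg m d. (\<lambda>i. if i \<le> m then map a [0..<Suc m] ! i else 0) = a"
      by (auto simp: monos_deg_def fun_eq_iff simp del: upt_Suc)
    show "\<forall>l\<in>{l. length l = Suc m \<and> sum_list l = d}.
        map (\<lambda>i. if i \<le> m then l ! i else 0) [0..<Suc m] = l"
      by (auto intro!: nth_equalityI simp del: upt_Suc)
    show "(\<lambda>a. map a [0..<Suc m]) ` monos_deg m d \<subseteq> {l. length l = Suc m \<and> sum_list l = d}"
      by (auto simp: monos_deg_def interv_sum_list_conv_sum_set_nat atLeast0LessThan lessThan_Suc_atMost
          simp del: upt_Suc)
    show "(\<lambda>l i. if i \<le> m then l ! i else 0) ` {l. length l = Suc m \<and> sum_list l = d} \<subseteq> monos_deg m d"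
      by (auto simp: monos_deg_def sum_list_sum_nth atLeast0LessThan simp flip: lessThan_Suc_atMost)
  qed
  then show ?thesis
    by (simp add: bij_betw_same_card card_length_sum_list add.commute)
qed

lemma finite_hom_polys: "finite (hom_polys m d :: ((nat \<Rightarrow> nat) \<Rightarrow> 'a::{finite,field}) set)"
proof (rule finite_subset)
  show "hom_polys m d \<subseteq>
      {F. \<forall>a. (a \<in> monos_deg m d \<longrightarrow> F a \<in> UNIV) \<and> (a \<notin> monos_deg m d \<longrightarrow> F a = 0)}"
    by (auto simp: hom_polys_def)
qed (rule finite_set_of_finite_funs[OF finite_monos_deg finite_class.finite_UNIV])

lemma finite_support_hom_poly: "F \<in> hom_polys m d \<Longrightarrow> finite {a. F a \<noteq> 0}"
  by (rule finite_subset[OF _ finite_monos_deg[of m d]]) (auto simp: hom_polys_def)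

lemma subspace_supported_in: "VS.subspace {F :: 'b \<Rightarrow> 'a::field. \<forall>a. F a \<noteq> 0 \<longrightarrow> a \<in> A}"
proof (rule VS.subspaceI)
  fix F G :: "'b \<Rightarrow> 'a"
  assume "F \<in> {F. \<forall>a. F a \<noteq> 0 \<longrightarrow> a \<in> A}" "G \<in> {F. \<forall>a. F a \<noteq> 0 \<longrightarrow> a \<in> A}"
  then have FG: "F a = 0 \<and> G a = 0" if "a \<notin> A" for a
    using that by blast
  show "F + G \<in> {F. \<forall>a. F a \<noteq> 0 \<longrightarrow> a \<in> A}"
  proof (intro CollectI allI impI)
    fix a
    assume "(F + G) a \<noteq> 0"
    then show "a \<in> A"
      using FG by (cases "a \<in> A") auto
  qed
qed auto

lemma subspace_hom_polys: "VS.subspace (hom_polys m d :: ((nat \<Rightarrow> nat) \<Rightarrow> 'a::field) set)"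
  unfolding hom_polys_def by (rule subspace_supported_in)

lemma subspace_PR_hom_polys: "VS.subspace (PR_hom_polys m d :: ((nat \<Rightarrow> nat) \<Rightarrow> 'a::{finite,field}) set)"
proof -
  have "PR_hom_polys m d =
      {F :: (nat \<Rightarrow> nat) \<Rightarrow> 'a. \<forall>a. F a \<noteq> 0 \<longrightarrow> a \<in> {a \<in> monos_deg m d. proj_reduced_mono CARD('a) m a}}"
    by (auto simp: PR_hom_polys_def hom_polys_def)
  then show ?thesis
    by (simp only: subspace_supported_in)
qed

lemma PR_hom_polys_subset: "PR_hom_polys m d \<subseteq> hom_polys m d"
  by (auto simp: PR_hom_polys_def)

lemma inj_mono_poly: "inj (mono_poly :: (nat \<Rightarrow> nat) \<Rightarrow> (nat \<Rightarrow> nat) \<Rightarrow> 'a::field)"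
  by (rule injI) (metis mono_poly_def one_neq_zero)

lemma mono_poly_in_PR_hom_polys:
  "a \<in> monos_deg m d \<Longrightarrow> proj_reduced_mono CARD('a) m a
    \<Longrightarrow> (mono_poly a :: (nat \<Rightarrow> nat) \<Rightarrow> 'a::{finite,field}) \<in> PR_hom_polys m d"
  by (simp add: PR_hom_polys_def hom_polys_def mono_poly_def)

lemma independent_mono_poly: "VS.independent (mono_poly ` S :: ((nat \<Rightarrow> nat) \<Rightarrow> 'a::field) set)"
proof
  assume "VS.dependent (mono_poly ` S :: ((nat \<Rightarrow> nat) \<Rightarrow> 'a) set)"
  then obtain T u v where T: "finite T" "T \<subseteq> mono_poly ` S" "(\<Sum>w\<in>T. fscale (u w) w) = 0"
    and v: "v \<in> T" "u v \<noteq> (0::'a)"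
    unfolding VS.dependent_explicit by blast
  obtain a where a: "v = mono_poly a"
    using T(2) v(1) by auto
  have "fscale (u w) w a = (if w = v then u v else 0)" if w: "w \<in> T" for w
  proof -
    obtain b where b: "w = mono_poly b"
      using T(2) w by auto
    have "w = v \<longleftrightarrow> b = a"
      using inj_mono_poly by (auto simp: a b dest: injD)
    moreover have "w a = (if b = a then 1 else 0)"
      by (simp add: b mono_poly_def)
    ultimately show ?thesis
      by auto
  qed
  then have "(\<Sum>w\<in>T. fscale (u w) w) a = (\<Sum>w\<in>T. if w = v then u v else 0)"
    unfolding sum_apply by (rule sum.cong[OF refl])
  also have "\<dots> = u v"
    using T(1) v(1) by simp
  finally have "(\<Sum>w\<in>T. fscale (u w) w) a = u v" .
  with T(3) v(2) show False
    by simp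
qed

lemma hom_polys_subset_span_mono_poly:
  "hom_polys m d \<subseteq> VS.span (mono_poly ` monos_deg m d :: ((nat \<Rightarrow> nat) \<Rightarrow> 'a::field) set)"
proof
  fix F :: "(nat \<Rightarrow> nat) \<Rightarrow> 'a"
  assume F: "F \<in> hom_polys m d"
  have "F = (\<Sum>a\<in>monos_deg m d. fscale (F a) (mono_poly a))"
  proof
    fix b
    have "(\<Sum>a\<in>monos_deg m d. fscale (F a) (mono_poly a)) b
        = (\<Sum>a\<in>monos_deg m d. if a = b then F b else 0)"
      unfolding sum_apply by (intro sum.cong) (auto simp: mono_poly_def)
    also have "\<dots> = F b"
      using F by (auto simp: finite_monos_deg hom_polys_def)
    finally show "F b = (\<Sum>a\<in>monos_deg m d. fscale (F a) (mono_poly a)) b" ..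
  qed
  also have "\<dots> \<in> VS.span (mono_poly ` monos_deg m d)"
    by (intro VS.span_sum VS.span_scale VS.span_base) auto
  finally show "F \<in> VS.span (mono_poly ` monos_deg m d)" .
qed

definition eval_mono :: "nat \<Rightarrow> (nat \<Rightarrow> nat) \<Rightarrow> (nat \<Rightarrow> 'a::field) \<Rightarrow> 'a" where
  "eval_mono m a v = (\<Prod>i\<le>m. v i ^ a i)"

text \<open>Unlike \<^const>\<open>eval_poly\<close>, this evaluation is linear in \<open>F\<close> for all \<open>F\<close>;
  the two agree on \<^term>\<open>hom_polys m d\<close>.\<close>
definition eval_deg :: "nat \<Rightarrow> nat \<Rightarrow> ((nat \<Rightarrow> nat) \<Rightarrow> 'a::field) \<Rightarrow> (nat \<Rightarrow> 'a) \<Rightarrow> 'a" where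
  "eval_deg m d F v = (\<Sum>a\<in>monos_deg m d. F a * eval_mono m a v)"

lemma eval_poly_eq_eval_deg: "F \<in> hom_polys m d \<Longrightarrow> eval_poly m F v = eval_deg m d F v"
  unfolding eval_poly_def eval_deg_def eval_mono_def
  by (rule sum.mono_neutral_left) (auto simp: hom_polys_def finite_monos_deg)

lemma eval_deg_0 [simp]: "eval_deg m d 0 v = 0"
  by (simp add: eval_deg_def)

lemma eval_deg_add: "eval_deg m d (F + G) v = eval_deg m d F v + eval_deg m d G v"
  by (simp add: eval_deg_def algebra_simps sum.distrib)

lemma eval_deg_diff: "eval_deg m d (F - G) v = eval_deg m d F v - eval_deg m d G v"
  by (simp add: eval_deg_def algebra_simps sum_subtractf)

lemma eval_deg_fscale: "eval_deg m d (fscale c F) v = c * eval_deg m d F v"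
  by (simp add: eval_deg_def sum_distrib_left mult.assoc)

lemma eval_deg_mono_poly: "a \<in> monos_deg m d \<Longrightarrow> eval_deg m d (mono_poly a) v = eval_mono m a v"
  by (simp add: eval_deg_def mono_poly_def if_distrib[of "\<lambda>x. x * _"] finite_monos_deg cong: if_cong)

lemma eval_deg_homogeneous: "eval_deg m d F (fscale c v) = c ^ d * eval_deg m d F v"
proof -
  have "eval_mono m a (fscale c v) = c ^ d * eval_mono m a v" if "a \<in> monos_deg m d" for a
  proof -
    have "eval_mono m a (fscale c v) = c ^ (\<Sum>i\<le>m. a i) * eval_mono m a v"
      by (simp add: eval_mono_def power_mult_distrib prod.distrib power_sum)
    with that show ?thesis
      by (simp add: monos_deg_def)
  qed
  then show ?thesis
    by (simp add: eval_deg_def sum_distrib_left mult.left_commute)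
qed

lemma eval_deg_at_zero: "d \<ge> 1 \<Longrightarrow> eval_deg m d F 0 = 0"
  using eval_deg_homogeneous[of m d F 0 0] by (simp add: fscale_def zero_fun_def power_0_left)

lemma sum_mult_unit_exp:
  assumes "i \<le> m"
  shows "(\<Sum>t\<le>m. f t * unit_exp i t) = (f i :: nat)"
proof -
  have "(\<Sum>t\<le>m. f t * unit_exp i t) = (\<Sum>t\<le>m. if t = i then f i else 0)"
    by (intro sum.cong) (auto simp: unit_exp_def)
  with assms show ?thesis
    by simp
qed

lemma prod_power_unit_exp:
  assumes "i \<le> m"
  shows "(\<Prod>t\<le>m. (v t :: 'a::comm_monoid_mult) ^ (c * unit_exp i t)) = v i ^ c"
proof -
  have "(\<Prod>t\<le>m. v t ^ (c * unit_exp i t)) = (\<Prod>t\<le>m. if t = i then v i ^ c else 1)"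
    by (intro prod.cong) (auto simp: unit_exp_def)
  with assms show ?thesis
    by simp
qed

lemma sum_shift_exp:
  assumes "i \<le> m" "j \<le> m"
  shows "(\<Sum>t\<le>m. b t + c1 * unit_exp i t + c2 * unit_exp j t) = (\<Sum>t\<le>m. b t) + c1 + c2"
  using assms sum_mult_unit_exp[of i m "\<lambda>_. c1"] sum_mult_unit_exp[of j m "\<lambda>_. c2"]
  by (simp add: sum.distrib)

lemma shift_exp_in_monos_deg:
  assumes "b \<in> monos_deg m e" "i \<le> m" "j \<le> m"
  shows "(\<lambda>t. b t + c1 * unit_exp i t + c2 * unit_exp j t) \<in> monos_deg m (e + c1 + c2)"
  using assms sum_shift_exp[OF assms(2,3)] by (auto simp: monos_deg_def unit_exp_def)

lemma eval_mono_shift_exp: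
  assumes "i \<le> m" "j \<le> m"
  shows "eval_mono m (\<lambda>t. b t + c1 * unit_exp i t + c2 * unit_exp j t) v
       = eval_mono m b v * v i ^ c1 * v j ^ c2"
  using assms by (simp add: eval_mono_def power_add prod.distrib prod_power_unit_exp)

section \<open>Reduction modulo the ideal\<close>

lemma
  assumes "i < j" "j \<le> m" "CARD('a::{finite,field}) + 1 \<le> d"
    and "b \<in> monos_deg m (d - (CARD('a) + 1))"
  shows gen_mult_in_hom_polys: "(gen_mult CARD('a) b i j :: (nat \<Rightarrow> nat) \<Rightarrow> 'a) \<in> hom_polys m d"
    and eval_deg_gen_mult: "eval_deg m d (gen_mult CARD('a) b i j :: (nat \<Rightarrow> nat) \<Rightarrow> 'a) v = 0"
proof -
  let ?q = "CARD('a)"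
  have ij: "i \<le> m" "j \<le> m"
    using assms(1,2) by simp_all
  have "d - (?q + 1) + ?q + 1 = d" "d - (?q + 1) + 1 + ?q = d"
    using assms(3) by simp_all
  then have shifted: "(\<lambda>t. b t + ?q * unit_exp i t + unit_exp j t) \<in> monos_deg m d"
      "(\<lambda>t. b t + unit_exp i t + ?q * unit_exp j t) \<in> monos_deg m d"
    using shift_exp_in_monos_deg[OF assms(4) ij, of ?q 1] shift_exp_in_monos_deg[OF assms(4) ij, of 1 ?q]
    by simp_all
  then show "(gen_mult ?q b i j :: (nat \<Rightarrow> nat) \<Rightarrow> 'a) \<in> hom_polys m d"
    unfolding gen_mult_def by (auto simp: hom_polys_def mono_poly_def)
  show "eval_deg m d (gen_mult ?q b i j :: (nat \<Rightarrow> nat) \<Rightarrow> 'a) v = 0"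
    using shifted eval_mono_shift_exp[OF ij, of b ?q 1 v] eval_mono_shift_exp[OF ij, of b 1 ?q v]
    unfolding gen_mult_def eval_deg_diff by (simp add: eval_deg_mono_poly power_card_eq_self)
qed

lemma subspace_ideal_deg: "VS.subspace (ideal_deg m d)"
  unfolding ideal_deg_def by (rule VS.subspace_span)

lemma ideal_deg_vanishes:
  "ideal_deg m d \<subseteq> {F \<in> hom_polys m d. \<forall>v. eval_deg m d F v = (0::'a::{finite,field})}"
  unfolding ideal_deg_def
proof (rule VS.span_minimal)
  show "VS.subspace {F \<in> hom_polys m d. \<forall>v. eval_deg m d F v = (0::'a)}"
    using subspace_hom_polys[of m d]
    by (auto simp: VS.subspace_def eval_deg_add eval_deg_fscale)
qed (auto simp: gen_mult_in_hom_polys eval_deg_gen_mult)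

text \<open>Rewriting \<open>x\<^sub>i\<^sup>q x\<^sub>k\<close> into \<open>x\<^sub>i x\<^sub>k\<^sup>q\<close> with \<open>i < k\<close> moves exponent to a later
  variable and therefore strictly decreases this weight.\<close>
definition exp_weight :: "nat \<Rightarrow> (nat \<Rightarrow> nat) \<Rightarrow> nat" where
  "exp_weight m a = (\<Sum>t\<le>m. a t * (m - t))"

lemma exp_weight_shift:
  assumes "i \<le> m" "k \<le> m"
  shows "exp_weight m (\<lambda>t. b t + c1 * unit_exp i t + c2 * unit_exp k t)
       = exp_weight m b + c1 * (m - i) + c2 * (m - k)"
proof -
  have "exp_weight m (\<lambda>t. b t + c1 * unit_exp i t + c2 * unit_exp k t)
      = exp_weight m b + (\<Sum>t\<le>m. (c1 * (m - t)) * unit_exp i t)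
        + (\<Sum>t\<le>m. (c2 * (m - t)) * unit_exp k t)"
    unfolding exp_weight_def sum.distrib[symmetric]
    by (intro sum.cong refl) (simp add: add_mult_distrib add_mult_distrib2 mult_ac)
  then show ?thesis
    using assms by (simp add: sum_mult_unit_exp)
qed

lemma not_proj_reduced_mono_decomp:
  assumes a: "a \<in> monos_deg m d" and not_reduced: "\<not> proj_reduced_mono q m a" and "q > 0"
  obtains b i k where "i < k" "k \<le> m" "q + 1 \<le> d" "b \<in> monos_deg m (d - (q + 1))"
    "a = (\<lambda>t. b t + q * unit_exp i t + unit_exp k t)"
proof -
  have "a \<noteq> (\<lambda>_. 0)"
    using not_reduced by (auto simp: proj_reduced_mono_def)
  moreover have a_above: "\<forall>t>m. a t = 0"
    using a by (simp add: monos_deg_def)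
  ultimately obtain k where k: "k \<le> m" "a k > 0" "\<forall>t>k. a t = 0"
    by (rule obtain_last_nonzero)
  then obtain i where i: "i < k" "\<not> a i \<le> q - 1"
    using not_reduced unfolding proj_reduced_mono_def by blast
  define b where "b t = a t - q * unit_exp i t - unit_exp k t" for t
  have a_eq: "a = (\<lambda>t. b t + q * unit_exp i t + unit_exp k t)"
    using i k(2) by (auto simp: b_def unit_exp_def fun_eq_iff)
  have "(\<Sum>t\<le>m. a t) = (\<Sum>t\<le>m. b t) + q + 1"
    using sum_shift_exp[of i m k b q 1] i(1) k(1) by (subst a_eq) simp
  then have "d = (\<Sum>t\<le>m. b t) + q + 1"
    using a by (simp add: monos_deg_def)
  moreover have "\<forall>t>m. b t = 0"
    using a_above by (simp add: b_def)
  ultimately show ?thesis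
    using that[OF i(1) k(1) _ _ a_eq] by (simp add: monos_deg_def)
qed

lemma mono_poly_in_span_ideal_PR:
  assumes "a \<in> monos_deg m d"
  shows "(mono_poly a :: (nat \<Rightarrow> nat) \<Rightarrow> 'a::{finite,field})
    \<in> VS.span (ideal_deg m d \<union> PR_hom_polys m d)"
  using assms
proof (induction "exp_weight m a" arbitrary: a rule: less_induct)
  case less
  let ?q = "CARD('a)"
  show ?case
  proof (cases "proj_reduced_mono ?q m a")
    case True
    then show ?thesis
      using less.prems by (intro VS.span_base UnI2 mono_poly_in_PR_hom_polys)
  next
    case False
    obtain b i k where ik: "i < k" "k \<le> m" and d: "?q + 1 \<le> d"
      and b: "b \<in> monos_deg m (d - (?q + 1))" and a: "a = (\<lambda>t. b t + ?q * unit_exp i t + unit_exp k t)"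
      using not_proj_reduced_mono_decomp[OF less.prems False zero_less_card_finite] by blast
    define a' where "a' = (\<lambda>t. b t + unit_exp i t + ?q * unit_exp k t)"
    have "mono_poly a = gen_mult ?q b i k + (mono_poly a' :: (nat \<Rightarrow> nat) \<Rightarrow> 'a)"
      by (simp add: gen_mult_def a a'_def)
    moreover have "gen_mult ?q b i k \<in> (ideal_deg m d :: ((nat \<Rightarrow> nat) \<Rightarrow> 'a) set)"
      unfolding ideal_deg_def using ik d b by (intro VS.span_base) blast
    moreover have "(mono_poly a' :: (nat \<Rightarrow> nat) \<Rightarrow> 'a) \<in> VS.span (ideal_deg m d \<union> PR_hom_polys m d)"
    proof (rule less.hyps)
      have "d - (?q + 1) + 1 + ?q = d"
        using d by simp
      then show "a' \<in> monos_deg m d"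
        using shift_exp_in_monos_deg[OF b, of i k 1 ?q] ik by (simp add: a'_def)
      have "exp_weight m a' = exp_weight m b + (m - i) + ?q * (m - k)"
        using exp_weight_shift[of i m k b 1 ?q] ik by (simp add: a'_def)
      also have "\<dots> < exp_weight m b + ?q * (m - i) + (m - k)"
      proof -
        have "(m - i) + ?q * (m - k) < ?q * (m - i) + (m - k)"
          using ik card_field_ge_2[where 'a='a] by (intro add_mult_less_mult_add) auto
        then show ?thesis
          by (simp only: add.assoc add_less_cancel_left)
      qed
      also have "\<dots> = exp_weight m a"
        using exp_weight_shift[of i m k b ?q 1] ik by (simp add: a)
      finally show "exp_weight m a' < exp_weight m a" .
    qed
    ultimately show ?thesis
      by (simp add: VS.span_add VS.span_base)
  qed
qed

lemma hom_polys_subset_span_ideal_PR: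
  "hom_polys m d
    \<subseteq> VS.span (ideal_deg m d \<union> PR_hom_polys m d :: ((nat \<Rightarrow> nat) \<Rightarrow> 'a::{finite,field}) set)"
proof -
  have "VS.span (mono_poly ` monos_deg m d)
      \<subseteq> VS.span (ideal_deg m d \<union> PR_hom_polys m d :: ((nat \<Rightarrow> nat) \<Rightarrow> 'a) set)"
    using mono_poly_in_span_ideal_PR by (intro VS.span_minimal) auto
  then show ?thesis
    using hom_polys_subset_span_mono_poly by blast
qed

lemma hom_poly_decomp:
  assumes "F \<in> hom_polys m d"
  obtains I P
  where "I \<in> ideal_deg m d" "P \<in> PR_hom_polys m d" "F = I + (P :: (nat \<Rightarrow> nat) \<Rightarrow> 'a::{finite,field})"
proof -
  have spans: "VS.span (ideal_deg m d :: ((nat \<Rightarrow> nat) \<Rightarrow> 'a) set) = ideal_deg m d"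
    "VS.span (PR_hom_polys m d :: ((nat \<Rightarrow> nat) \<Rightarrow> 'a) set) = PR_hom_polys m d"
    using subspace_ideal_deg subspace_PR_hom_polys by (simp_all add: VS.span_eq_iff)
  have "F \<in> {I + P | I P. I \<in> ideal_deg m d \<and> P \<in> PR_hom_polys m d}"
    using assms hom_polys_subset_span_ideal_PR[where 'a='a, of m d] unfolding VS.span_Un spans by blast
  then show ?thesis
    using that by blast
qed

lemma dim_PR_hom_polys_ge:
  "(m + d choose d)
    \<le> r_d TYPE('a) m d + VS.dim (PR_hom_polys m d :: ((nat \<Rightarrow> nat) \<Rightarrow> 'a::{finite,field}) set)"
proof -
  let ?I = "ideal_deg m d :: ((nat \<Rightarrow> nat) \<Rightarrow> 'a) set"
  let ?P = "PR_hom_polys m d :: ((nat \<Rightarrow> nat) \<Rightarrow> 'a) set"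
  let ?M = "mono_poly ` monos_deg m d :: ((nat \<Rightarrow> nat) \<Rightarrow> 'a) set"
  have "?I \<subseteq> hom_polys m d"
    using ideal_deg_vanishes by blast
  then have fin: "finite ?I" "finite ?P"
    using finite_subset[OF PR_hom_polys_subset finite_hom_polys]
    by (auto intro: finite_subset[OF _ finite_hom_polys])
  have "(m + d choose d) = card ?M"
    using card_image[OF inj_on_subset[OF inj_mono_poly[where 'a='a] subset_UNIV]] by (simp add: card_monos_deg)
  also have "\<dots> = VS.dim ?M"
    by (simp add: VS.dim_eq_card_independent independent_mono_poly)
  also have "\<dots> \<le> VS.dim (?I \<union> ?P)"
    using mono_poly_in_span_ideal_PR[where 'a='a] fin by (intro VS.dim_le_dim_if_subset_span) auto
  also have "\<dots> \<le> VS.dim ?I + VS.dim ?P"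
    using fin by (rule VS.dim_Un_le)
  finally show ?thesis
    by (simp add: r_d_def)
qed

section \<open>Projectively reduced polynomials vanishing everywhere\<close>

definition trunc :: "nat \<Rightarrow> (nat \<Rightarrow> 'b::zero) \<Rightarrow> nat \<Rightarrow> 'b" where
  "trunc n f = (\<lambda>i. if i < n then f i else 0)"

lemma sum_prod_group_last_var:
  fixes c :: "(nat \<Rightarrow> nat) \<Rightarrow> 'a::comm_semiring_1"
  assumes "finite S" "\<And>a. a \<in> S \<Longrightarrow> a n < q"
  shows "(\<Sum>a\<in>S. c a * (\<Prod>i<Suc n. (v(n := x)) i ^ a i))
       = (\<Sum>e<q. (\<Sum>a\<in>{a \<in> S. a n = e}. c a * (\<Prod>i<n. v i ^ a i)) * x ^ e)"
proof -
  have "(\<Sum>a\<in>S. c a * (\<Prod>i<Suc n. (v(n := x)) i ^ a i)) = (\<Sum>a\<in>S. c a * (\<Prod>i<n. v i ^ a i) * x ^ a n)"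
    by (intro sum.cong refl) (simp add: mult.assoc)
  also have "\<dots> = (\<Sum>e<q. \<Sum>a\<in>{a \<in> S. a n = e}. c a * (\<Prod>i<n. v i ^ a i) * x ^ a n)"
    using assms by (intro sum.group[symmetric]) auto
  also have "\<dots> = (\<Sum>e<q. (\<Sum>a\<in>{a \<in> S. a n = e}. c a * (\<Prod>i<n. v i ^ a i)) * x ^ e)"
    by (simp add: sum_distrib_right)
  finally show ?thesis .
qed

text \<open>The exponent vectors in \<open>S\<close> may have arbitrary entries from \<open>n\<close> on; only the variables
  \<open>x\<^sub>i\<close> with \<open>i < n\<close> are evaluated, so their truncations below \<open>n\<close> must be distinct.\<close>
lemma reduced_poly_vanishing_imp_zero:
  fixes c :: "(nat \<Rightarrow> nat) \<Rightarrow> 'a::{finite,field}"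
  assumes "finite S" "\<And>a i. a \<in> S \<Longrightarrow> i < n \<Longrightarrow> a i < CARD('a)" "inj_on (trunc n) S"
    and "\<And>v. (\<Sum>a\<in>S. c a * (\<Prod>i<n. v i ^ a i)) = 0"
  shows "\<forall>a\<in>S. c a = 0"
  using assms
proof (induction n arbitrary: S)
  case 0
  show ?case
  proof
    fix a
    assume "a \<in> S"
    then have "S = {a}"
      using inj_onD[OF "0.prems"(3)] by (auto simp: trunc_def)
    with "0.prems"(4) show "c a = 0"
      by simp
  qed
next
  case (Suc n)
  show ?case
  proof
    fix a
    assume a: "a \<in> S"
    let ?S = "{b \<in> S. b n = a n}"
    txt \<open>For fixed \<open>v\<close> the sum is a polynomial in \<open>x\<^sub>n\<close> of degree below \<open>q\<close>, and the
      sum over \<open>?S\<close> is one of its coefficients.\<close>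
    have "(\<Sum>b\<in>?S. c b * (\<Prod>i<n. v i ^ b i)) = 0" for v
    proof (rule coeff_zero_if_vanishing[where c = "\<lambda>e. \<Sum>b\<in>{b \<in> S. b n = e}. c b * (\<Prod>i<n. v i ^ b i)"])
      show "(\<Sum>e<CARD('a). (\<Sum>b\<in>{b \<in> S. b n = e}. c b * (\<Prod>i<n. v i ^ b i)) * x ^ e) = 0" for x
        using Suc.prems(4)[of "v(n := x)"] Suc.prems(1,2) sum_prod_group_last_var[of S n "CARD('a)" c v x]
        by simp
      show "a n < CARD('a)"
        using Suc.prems(2) a by simp
    qed
    moreover have "inj_on (trunc n) ?S"
    proof (rule inj_onI)
      fix b b'
      assume b: "b \<in> ?S" "b' \<in> ?S" and trunc: "trunc n b = trunc n b'"
      have "b i = b' i" if "i < Suc n" for i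
        using b that fun_cong[OF trunc, of i] by (cases "i = n") (auto simp: trunc_def)
      then have "trunc (Suc n) b = trunc (Suc n) b'"
        by (simp add: trunc_def fun_eq_iff)
      with b show "b = b'"
        using inj_onD[OF Suc.prems(3)] by blast
    qed
    ultimately have "\<forall>b\<in>?S. c b = 0"
      using Suc.prems(1,2) by (intro Suc.IH) auto
    with a show "c a = 0"
      by simp
  qed
qed

lemma proj_reduced_mono_exponent_less:
  assumes "proj_reduced_mono q m a" "a m > 0" "i < m" "q > 0"
  shows "a i < q"
proof -
  obtain k where k: "k \<le> m" "\<forall>t>k. a t = 0" "\<forall>t<k. a t \<le> q - 1"
    using assms(1,2) unfolding proj_reduced_mono_def by auto
  moreover have "\<not> k < m"
    using k(2) assms(2) by auto
  ultimately have "k = m"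
    by simp
  with k(3) assms(3,4) show ?thesis
    by fastforce
qed

lemma inj_on_trunc_monos_deg: "inj_on (trunc m) (monos_deg m d)"
proof (rule inj_onI)
  fix a b
  assume a: "a \<in> monos_deg m d" and b: "b \<in> monos_deg m d" and trunc: "trunc m a = trunc m b"
  have below: "a i = b i" if "i < m" for i
    using that fun_cong[OF trunc, of i] by (simp add: trunc_def)
  then have "(\<Sum>i<m. a i) = (\<Sum>i<m. b i)"
    by simp
  moreover have "(\<Sum>i<m. a i) + a m = (\<Sum>i<m. b i) + b m"
    using a b by (simp add: monos_deg_def flip: lessThan_Suc_atMost)
  ultimately have "a m = b m"
    by simp
  moreover have "a i = b i" if "i > m" for i
    using a b that by (simp add: monos_deg_def)
  ultimately show "a = b"
    using below by (metis linorder_neqE_nat ext)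
qed

lemma eval_poly_last_var_one:
  "eval_poly m F (v(m := 1)) = (\<Sum>a | F a \<noteq> 0. F a * (\<Prod>i<m. v i ^ a i))"
  unfolding eval_poly_def by (intro sum.cong refl) (simp flip: lessThan_Suc_atMost)

lemma PR_vanishing_imp_zero_if_last_var_occurs:
  assumes F: "F \<in> PR_hom_polys m d" and last: "\<forall>a. F a \<noteq> 0 \<longrightarrow> a m > 0"
    and vanishing: "\<forall>v. eval_poly m F v = 0"
  shows "F = (0 :: (nat \<Rightarrow> nat) \<Rightarrow> 'a::{finite,field})"
proof -
  let ?S = "{a. F a \<noteq> 0}"
  have S: "?S \<subseteq> monos_deg m d"
    using F by (auto simp: PR_hom_polys_def hom_polys_def)
  have "\<forall>a\<in>?S. F a = 0"
  proof (rule reduced_poly_vanishing_imp_zero[where n = m])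
    show "finite ?S"
      using S finite_monos_deg by (rule finite_subset)
    show "a i < CARD('a)" if "a \<in> ?S" "i < m" for a i
      using proj_reduced_mono_exponent_less[of "CARD('a)" m a i] F last that
      by (simp add: PR_hom_polys_def)
    show "inj_on (trunc m) ?S"
      using inj_on_trunc_monos_deg S by (rule inj_on_subset)
    show "(\<Sum>a\<in>?S. F a * (\<Prod>i<m. v i ^ a i)) = 0" for v
      using vanishing eval_poly_last_var_one[of m F v] by simp
  qed
  then show ?thesis
    by auto
qed

lemma monos_deg_drop_last_var:
  assumes "a \<in> monos_deg (Suc m) d" "a (Suc m) = 0"
  shows "a \<in> monos_deg m d"
proof -
  have "a i = 0" if "i > m" for i
    using assms that by (cases "i = Suc m") (auto simp: monos_deg_def)
  with assms show ?thesis
    by (simp add: monos_deg_def)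
qed

lemma proj_reduced_mono_drop_last_var:
  assumes "proj_reduced_mono q (Suc m) a" "a (Suc m) = 0"
  shows "proj_reduced_mono q m a"
proof -
  have "k \<le> m" if "k \<le> Suc m" "a k > 0" for k
    using assms(2) that le_Suc_eq by auto
  with assms(1) show ?thesis
    unfolding proj_reduced_mono_def by blast
qed

lemma PR_hom_polys_drop_last_var:
  assumes "F \<in> PR_hom_polys (Suc m) d"
  shows "(\<lambda>a. if a (Suc m) = 0 then F a else 0) \<in> PR_hom_polys m d"
  using assms monos_deg_drop_last_var proj_reduced_mono_drop_last_var
  by (simp add: PR_hom_polys_def hom_polys_def)

lemma eval_poly_last_var_zero:
  assumes "F \<in> hom_polys (Suc m) d"
  shows "eval_poly (Suc m) F (v(Suc m := 0)) = eval_poly m (\<lambda>a. if a (Suc m) = 0 then F a else 0) v"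
proof -
  have "(\<Prod>i\<le>Suc m. (v(Suc m := 0)) i ^ a i) = (if a (Suc m) = 0 then 1 else 0) * (\<Prod>i\<le>m. v i ^ a i)"
    for a :: "nat \<Rightarrow> nat"
    by (simp add: power_0_left)
  then have "eval_poly (Suc m) F (v(Suc m := 0))
      = (\<Sum>a | F a \<noteq> 0. (if a (Suc m) = 0 then F a else 0) * (\<Prod>i\<le>m. v i ^ a i))"
    unfolding eval_poly_def by (intro sum.cong refl) simp
  also have "\<dots> = eval_poly m (\<lambda>a. if a (Suc m) = 0 then F a else 0) v"
    unfolding eval_poly_def
    using finite_support_hom_poly[OF assms] by (intro sum.mono_neutral_right) auto
  finally show ?thesis .
qed

theorem PR_vanishing_imp_zero:
  assumes "F \<in> PR_hom_polys m d" "d \<ge> 1" "\<forall>v. eval_poly m F v = 0"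
  shows "F = (0 :: (nat \<Rightarrow> nat) \<Rightarrow> 'a::{finite,field})"
  using assms
proof (induction m arbitrary: F)
  case 0
  have "a 0 > 0" if "F a \<noteq> 0" for a
    using "0.prems"(1,2) that by (auto simp: PR_hom_polys_def hom_polys_def monos_deg_def)
  with "0.prems"(1,3) show ?case
    by (intro PR_vanishing_imp_zero_if_last_var_occurs) auto
next
  case (Suc m)
  let ?F = "\<lambda>a. if a (Suc m) = 0 then F a else 0"
  have "?F \<in> PR_hom_polys m d"
    using Suc.prems(1) by (rule PR_hom_polys_drop_last_var)
  moreover have "\<forall>v. eval_poly m ?F v = 0"
  proof
    fix v
    have "F \<in> hom_polys (Suc m) d"
      using Suc.prems(1) PR_hom_polys_subset by blast
    then have "eval_poly m ?F v = eval_poly (Suc m) F (v(Suc m := 0))"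
      by (rule eval_poly_last_var_zero[symmetric])
    with Suc.prems(3) show "eval_poly m ?F v = 0"
      by simp
  qed
  ultimately have "?F = 0"
    using Suc.IH Suc.prems(2) by blast
  then have "a (Suc m) > 0" if "F a \<noteq> 0" for a
    using that fun_cong[of ?F 0 a] by (auto split: if_splits)
  with Suc.prems(1,3) show ?case
    by (intro PR_vanishing_imp_zero_if_last_var_occurs) auto
qed

section \<open>Points of projective space\<close>

lemma mem_proj_line: "v \<in> proj_line v"
  unfolding proj_line_def by (rule CollectI, rule exI[of _ 1]) (simp add: fscale_def)

lemma proj_line_fscale:
  assumes "(c::'a::field) \<noteq> 0"
  shows "proj_line (fscale c v) = proj_line v"
proof (intro equalityI subsetI)
  fix w
  assume "w \<in> proj_line (fscale c v)"
  then obtain e where "w = fscale e (fscale c v)"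
    unfolding proj_line_def by blast
  then have "w = fscale (e * c) v"
    by (simp add: fscale_def fun_eq_iff)
  then show "w \<in> proj_line v"
    unfolding proj_line_def by blast
next
  fix w
  assume "w \<in> proj_line v"
  then obtain e where "w = fscale e v"
    unfolding proj_line_def by blast
  then have "w = fscale (e / c) (fscale c v)"
    using assms by (simp add: fscale_def fun_eq_iff)
  then show "w \<in> proj_line (fscale c v)"
    unfolding proj_line_def by blast
qed

lemma rep_system_obtain:
  assumes "rep_system m R" "v \<in> aff_vecs m" "v \<noteq> 0"
  obtains P c where "P \<in> R" "c \<noteq> (0::'a::field)" "v = fscale c P"
proof -
  have "proj_line v \<in> proj_points m"
    using assms(2,3) unfolding proj_points_def by blast
  then obtain P where P: "P \<in> R" "proj_line P = proj_line v"
    using assms(1) unfolding rep_system_def bij_betw_def by (metis imageE)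
  then obtain c where c: "v = fscale c P"
    using mem_proj_line[of v] unfolding proj_line_def by blast
  with assms(3) have "c \<noteq> 0"
    by (auto simp: fscale_def fun_eq_iff)
  with P c show ?thesis
    using that by blast
qed

lemma finite_aff_vecs: "finite (aff_vecs m :: (nat \<Rightarrow> 'a::{finite,field}) set)"
proof (rule finite_subset)
  show "aff_vecs m \<subseteq> {v :: nat \<Rightarrow> 'a. \<forall>i. (i \<in> {..m} \<longrightarrow> v i \<in> UNIV) \<and> (i \<notin> {..m} \<longrightarrow> v i = 0)}"
    by (auto simp: aff_vecs_def)
qed (rule finite_set_of_finite_funs[OF finite_atMost finite_class.finite_UNIV])

lemma zero_in_aff_vecs: "0 \<in> aff_vecs m"
  by (simp add: aff_vecs_def)

lemma card_aff_vecs: "card (aff_vecs m :: (nat \<Rightarrow> 'a::{finite,field}) set) = CARD('a) ^ Suc m"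
proof -
  have "bij_betw (\<lambda>v. restrict v {..m}) (aff_vecs m :: (nat \<Rightarrow> 'a) set) ({..m} \<rightarrow>\<^sub>E UNIV)"
  proof (rule bij_betw_byWitness[where f' = "trunc (Suc m)"])
    show "\<forall>v\<in>aff_vecs m. trunc (Suc m) (restrict v {..m}) = v"
      by (auto simp: aff_vecs_def trunc_def fun_eq_iff)
    show "\<forall>f\<in>{..m} \<rightarrow>\<^sub>E UNIV. restrict (trunc (Suc m) f) {..m} = f"
      by (auto simp: trunc_def fun_eq_iff PiE_def extensional_def)
    show "(\<lambda>v. restrict v {..m}) ` aff_vecs m \<subseteq> {..m} \<rightarrow>\<^sub>E UNIV"
      by (intro image_subsetI) (simp add: restrict_PiE_iff)
    show "trunc (Suc m) ` ({..m} \<rightarrow>\<^sub>E UNIV) \<subseteq> aff_vecs m"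
      by (auto simp: aff_vecs_def trunc_def)
  qed
  then show ?thesis
    by (simp add: bij_betw_same_card card_funcsetE)
qed

lemma p_m_times_pred:
  assumes "q > 0"
  shows "p_m q m * (q - 1) + 1 = q ^ Suc m"
proof -
  obtain p where "q = Suc p"
    using assms gr0_implies_Suc by blast
  then show ?thesis
    unfolding p_m_def by (induction m) (simp_all add: algebra_simps)
qed

lemma bij_betw_rep_system_scalings:
  assumes R: "rep_system m R"
  shows "bij_betw (\<lambda>(P, c). fscale c P) (R \<times> (UNIV - {0::'a::field})) (aff_vecs m - {0})"
proof (rule bij_betw_imageI)
  have R_sub: "R \<subseteq> aff_vecs m - {0}"
    using R by (simp add: rep_system_def)
  show "inj_on (\<lambda>(P, c). fscale c P) (R \<times> (UNIV - {0}))"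
  proof (rule inj_onI)
    fix x y
    assume "x \<in> R \<times> (UNIV - {0})" "y \<in> R \<times> (UNIV - {0})"
      and "(\<lambda>(P, c). fscale c P) x = (\<lambda>(P, c). fscale c P) y"
    then obtain P P' :: "nat \<Rightarrow> 'a" and c c' :: 'a where xy: "x = (P, c)" "y = (P', c')"
      and P: "P \<in> R" "P' \<in> R" and c: "c \<noteq> 0" "c' \<noteq> 0" and eq: "fscale c P = fscale c' P'"
      by auto
    have "proj_line P = proj_line P'"
      using proj_line_fscale[OF c(1), of P] proj_line_fscale[OF c(2), of P'] eq by simp
    then have "P = P'"
      using R P unfolding rep_system_def bij_betw_def by (blast dest: inj_onD)
    moreover have "P \<noteq> 0"
      using R_sub P(1) by blast
    then obtain i where "P i \<noteq> 0"
      by (auto simp: fun_eq_iff)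
    moreover have "c * P i = c' * P' i"
      using eq by (simp add: fun_eq_iff)
    ultimately show "x = y"
      by (simp add: xy)
  qed
  show "(\<lambda>(P, c). fscale c P) ` (R \<times> (UNIV - {0})) = aff_vecs m - {0}"
  proof
    show "(\<lambda>(P, c). fscale c P) ` (R \<times> (UNIV - {0})) \<subseteq> aff_vecs m - {0}"
      using R_sub by (auto simp: aff_vecs_def fun_eq_iff)
    show "aff_vecs m - {0} \<subseteq> (\<lambda>(P, c). fscale c P) ` (R \<times> (UNIV - {0}))"
      by (auto elim!: rep_system_obtain[OF R])
  qed
qed

lemma card_rep_system:
  assumes "rep_system m R"
  shows "card (R :: (nat \<Rightarrow> 'a::{finite,field}) set) = p_m CARD('a) m"
proof -
  let ?q = "CARD('a)"
  have "card R * (?q - 1) = card (aff_vecs m - {0 :: nat \<Rightarrow> 'a})"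
    using bij_betw_same_card[OF bij_betw_rep_system_scalings[OF assms]]
    by (simp add: card_cartesian_product card_Diff_singleton)
  also have "\<dots> = ?q ^ Suc m - 1"
    using finite_aff_vecs[where 'a='a] card_aff_vecs[where 'a='a]
    by (simp add: card_Diff_singleton zero_in_aff_vecs)
  also have "\<dots> = p_m ?q m * (?q - 1)"
    using p_m_times_pred[of ?q m] by simp
  finally show ?thesis
    using card_field_ge_2[where 'a='a] by simp
qed

section \<open>Subcodes of the projective Reed-Muller code\<close>

definition codeword ::
  "nat \<Rightarrow> nat \<Rightarrow> (nat \<Rightarrow> 'a::field) set \<Rightarrow> ((nat \<Rightarrow> nat) \<Rightarrow> 'a) \<Rightarrow> (nat \<Rightarrow> 'a) \<Rightarrow> 'a"
  where "codeword m d R F = (\<lambda>P. if P \<in> R then eval_deg m d F P else 0)"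

lemma linear_codeword: "Vector_Spaces.linear fscale fscale (codeword m d R :: ((nat \<Rightarrow> nat) \<Rightarrow> 'a::field) \<Rightarrow> _)"
  unfolding Vector_Spaces.linear_iff
  by (simp add: vector_space_fscale codeword_def fun_eq_iff eval_deg_add eval_deg_fscale)

lemma PRM_eq_image_hom_polys: "PRM d m R = codeword m d R ` hom_polys m d"
proof -
  have "PRM d m R = (\<lambda>F P. if P \<in> R then eval_poly m F P else 0) ` hom_polys m d"
    unfolding PRM_def by blast
  also have "\<dots> = codeword m d R ` hom_polys m d"
    using eval_poly_eq_eval_deg by (intro image_cong refl) (auto simp: codeword_def fun_eq_iff)
  finally show ?thesis .
qed

lemma PRM_eq_image_PR_hom_polys:
  "PRM d m R = codeword m d R ` (PR_hom_polys m d :: ((nat \<Rightarrow> nat) \<Rightarrow> 'a::{finite,field}) set)"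
proof
  show "codeword m d R ` PR_hom_polys m d \<subseteq> PRM d m R"
    unfolding PRM_eq_image_hom_polys using PR_hom_polys_subset by (rule image_mono)
  show "PRM d m R \<subseteq> codeword m d R ` PR_hom_polys m d"
  proof
    fix c
    assume "c \<in> PRM d m R"
    then obtain F where F: "F \<in> hom_polys m d" "c = codeword m d R F"
      unfolding PRM_eq_image_hom_polys by blast
    obtain I P where IP: "I \<in> ideal_deg m d" "P \<in> PR_hom_polys m d" "F = I + P"
      by (rule hom_poly_decomp[OF F(1)])
    have "\<forall>v. eval_deg m d I v = 0"
      using ideal_deg_vanishes IP(1) by blast
    then have "c = codeword m d R P"
      using F(2) IP(3) by (simp add: codeword_def eval_deg_add fun_eq_iff)
    with IP(2) show "c \<in> codeword m d R ` PR_hom_polys m d"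
      by blast
  qed
qed

lemma eval_deg_trunc: "eval_deg m d F (trunc (Suc m) v) = eval_deg m d F v"
  unfolding eval_deg_def eval_mono_def trunc_def
  by (intro sum.cong refl arg_cong2[where f = "(*)"] prod.cong) auto

lemma vanishing_on_rep_system_imp_vanishing:
  assumes R: "rep_system m R" and "d \<ge> 1" and F: "F \<in> hom_polys m d"
    and vanishing: "\<forall>P\<in>R. eval_deg m d F P = (0::'a::field)"
  shows "eval_poly m F v = 0"
proof -
  let ?w = "trunc (Suc m) v"
  have "eval_deg m d F ?w = 0"
  proof (cases "?w = 0")
    case True
    then show ?thesis
      using eval_deg_at_zero[OF \<open>d \<ge> 1\<close>] by simp
  next
    case False
    moreover have "?w \<in> aff_vecs m"
      by (simp add: aff_vecs_def trunc_def)
    ultimately obtain P c where "P \<in> R" "?w = fscale c P"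
      using rep_system_obtain[OF R] by metis
    then show ?thesis
      using vanishing by (simp add: eval_deg_homogeneous)
  qed
  then show ?thesis
    using F by (simp add: eval_poly_eq_eval_deg eval_deg_trunc)
qed

lemma inj_on_codeword_PR_hom_polys:
  assumes R: "rep_system m R" and "d \<ge> 1"
  shows "inj_on (codeword m d R) (PR_hom_polys m d :: ((nat \<Rightarrow> nat) \<Rightarrow> 'a::{finite,field}) set)"
  unfolding VP.linear_inj_on_iff_eq_0[OF linear_codeword subspace_PR_hom_polys]
proof (intro ballI impI)
  fix F :: "(nat \<Rightarrow> nat) \<Rightarrow> 'a"
  assume F: "F \<in> PR_hom_polys m d" and "codeword m d R F = 0"
  then have "\<forall>P\<in>R. eval_deg m d F P = 0"
    by (auto simp: codeword_def fun_eq_iff split: if_splits)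
  then have "\<forall>v. eval_poly m F v = 0"
    using F PR_hom_polys_subset by (blast intro: vanishing_on_rep_system_imp_vanishing[OF R \<open>d \<ge> 1\<close>])
  with F \<open>d \<ge> 1\<close> show "F = 0"
    by (rule PR_vanishing_imp_zero)
qed

definition common_zeros ::
  "nat \<Rightarrow> nat \<Rightarrow> (nat \<Rightarrow> 'a::field) set \<Rightarrow> ((nat \<Rightarrow> nat) \<Rightarrow> 'a) set \<Rightarrow> (nat \<Rightarrow> 'a) set"
  where "common_zeros m d R Gs = {P \<in> R. \<forall>G\<in>Gs. eval_deg m d G P = 0}"

lemma proj_line_vanishing_iff:
  assumes "G \<in> hom_polys m d"
  shows "(\<forall>v\<in>proj_line P. eval_poly m G v = 0) \<longleftrightarrow> eval_deg m d G P = (0::'a::field)"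
  using assms mem_proj_line[of P]
  by (auto simp: proj_line_def eval_poly_eq_eval_deg eval_deg_homogeneous)

lemma card_proj_common_zeros:
  assumes R: "rep_system m R" and Gs: "Gs \<subseteq> hom_polys m d"
  shows "card {L \<in> proj_points m. \<forall>G\<in>Gs. \<forall>v\<in>L. eval_poly m G v = 0}
       = card (common_zeros m d R (Gs :: ((nat \<Rightarrow> nat) \<Rightarrow> 'a::field) set))"
proof -
  have bij: "bij_betw proj_line R (proj_points m)"
    using R by (simp add: rep_system_def)
  have vanishing_iff: "(\<forall>G\<in>Gs. \<forall>v\<in>proj_line P. eval_poly m G v = 0) \<longleftrightarrow> P \<in> common_zeros m d R Gs"
    if "P \<in> R" for P
  proof -
    have "(\<forall>v\<in>proj_line P. eval_poly m G v = 0) \<longleftrightarrow> eval_deg m d G P = 0" if "G \<in> Gs" for G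
      using Gs that by (intro proj_line_vanishing_iff) auto
    with \<open>P \<in> R\<close> show ?thesis
      by (auto simp: common_zeros_def)
  qed
  have "{L \<in> proj_points m. \<forall>G\<in>Gs. \<forall>v\<in>L. eval_poly m G v = 0} = proj_line ` common_zeros m d R Gs"
    unfolding bij_betw_imp_surj_on[OF bij, symmetric]
    using vanishing_iff by (auto simp: common_zeros_def)
  moreover have "inj_on proj_line (common_zeros m d R Gs)"
    using bij_betw_imp_inj_on[OF bij] by (rule inj_on_subset) (auto simp: common_zeros_def)
  ultimately show ?thesis
    by (simp add: card_image)
qed

lemma eval_deg_vanishes_on_span:
  "(\<forall>G\<in>VS.span Gs. eval_deg m d G P = 0) \<longleftrightarrow> (\<forall>G\<in>Gs. eval_deg m d G P = (0::'a::field))"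
proof
  assume "\<forall>G\<in>Gs. eval_deg m d G P = 0"
  moreover have "VS.subspace {G :: (nat \<Rightarrow> nat) \<Rightarrow> 'a. eval_deg m d G P = 0}"
    by (simp add: VS.subspace_def eval_deg_add eval_deg_fscale)
  ultimately have "VS.span Gs \<subseteq> {G. eval_deg m d G P = 0}"
    by (intro VS.span_minimal) auto
  then show "\<forall>G\<in>VS.span Gs. eval_deg m d G P = 0"
    by blast
qed (use VS.span_superset in blast)

lemma Supp_codeword_span: "Supp (codeword m d R ` VS.span Gs) = R - common_zeros m d R Gs"
  using eval_deg_vanishes_on_span[of Gs m d]
  by (auto simp: Supp_def codeword_def common_zeros_def split: if_splits)

definition PR_families :: "nat \<Rightarrow> nat \<Rightarrow> nat \<Rightarrow> ((nat \<Rightarrow> nat) \<Rightarrow> 'a::{finite,field}) set set" where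
  "PR_families m d r = {Gs. Gs \<subseteq> PR_hom_polys m d \<and> card Gs = r \<and> VS.independent Gs}"

lemma finite_PR_families: "finite (PR_families m d r)"
proof (rule finite_subset)
  show "PR_families m d r \<subseteq> Pow (hom_polys m d)"
    using PR_hom_polys_subset by (auto simp: PR_families_def)
qed (simp add: finite_hom_polys)

lemma PR_families_nonempty:
  assumes "r \<le> (m + d choose d) - r_d TYPE('a) m d"
  shows "(PR_families m d r :: ((nat \<Rightarrow> nat) \<Rightarrow> 'a::{finite,field}) set set) \<noteq> {}"
proof -
  let ?P = "PR_hom_polys m d :: ((nat \<Rightarrow> nat) \<Rightarrow> 'a) set"
  obtain B where B: "B \<subseteq> ?P" "VS.independent B" "?P \<subseteq> VS.span B" "card B = VS.dim ?P"
    by (rule VS.basis_exists)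
  moreover have "r \<le> card B"
    using assms dim_PR_hom_polys_ge[where 'a='a, of m d] B(4) by linarith
  then obtain Gs where "Gs \<subseteq> B" "card Gs = r"
    by (rule obtain_subset_with_card_n)
  ultimately have "Gs \<in> PR_families m d r"
    unfolding PR_families_def using VS.independent_mono by blast
  then show ?thesis
    by blast
qed

lemma subcode_of_PR_family:
  assumes R: "rep_system m R" and "d \<ge> 1" and Gs: "Gs \<in> PR_families m d r"
  shows "codeword m d R ` VS.span Gs \<subseteq> PRM d m R"
    and "VS.subspace (codeword m d R ` VS.span Gs)"
    and "VS.dim (codeword m d R ` VS.span Gs) = r"
proof -
  have span: "VS.span Gs \<subseteq> PR_hom_polys m d"
    using Gs subspace_PR_hom_polys by (intro VS.span_minimal) (auto simp: PR_families_def)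
  then show "codeword m d R ` VS.span Gs \<subseteq> PRM d m R"
    unfolding PRM_eq_image_PR_hom_polys by (rule image_mono)
  show "VS.subspace (codeword m d R ` VS.span Gs)"
    by (rule VP.linear_subspace_image[OF linear_codeword VS.subspace_span])
  have "inj_on (codeword m d R) (VS.span (VS.span Gs))"
    using inj_on_subset[OF inj_on_codeword_PR_hom_polys[OF R \<open>d \<ge> 1\<close>] span] by (simp add: VS.span_span)
  then have "VS.dim (codeword m d R ` VS.span Gs) = VS.dim (VS.span Gs)"
    by (rule VP.dim_image_eq_if_inj_on_span[OF linear_codeword])
  then show "VS.dim (codeword m d R ` VS.span Gs) = r"
    using Gs by (simp add: PR_families_def VS.dim_eq_card_independent)
qed

lemma PR_family_of_subcode:
  assumes R: "rep_system m R" and "d \<ge> 1" and D: "D \<subseteq> PRM d m R" "VS.subspace D"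
  obtains Gs where "Gs \<in> PR_families m d (VS.dim D)" "D = codeword m d R ` VS.span Gs"
proof -
  let ?D = "PR_hom_polys m d \<inter> codeword m d R -` D"
  have sub: "VS.subspace ?D"
    using subspace_PR_hom_polys VP.linear_subspace_vimage[OF linear_codeword D(2)] by (rule VS.subspace_inter)
  have image: "codeword m d R ` ?D = D"
    using D(1) unfolding PRM_eq_image_PR_hom_polys by blast
  obtain Gs where Gs: "Gs \<subseteq> ?D" "VS.independent Gs" "?D \<subseteq> VS.span Gs" "card Gs = VS.dim ?D"
    by (rule VS.basis_exists)
  have span: "VS.span Gs = ?D"
    using Gs(1,3) sub by (rule VS.span_subspace)
  have "inj_on (codeword m d R) ?D"
    using inj_on_codeword_PR_hom_polys[OF R \<open>d \<ge> 1\<close>] by (rule inj_on_subset) blast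
  moreover have span_D: "VS.span ?D = ?D"
    using sub by (simp add: VS.span_eq_iff)
  ultimately have "inj_on (codeword m d R) (VS.span ?D)"
    by (simp only: span_D)
  then have "VS.dim (codeword m d R ` ?D) = VS.dim ?D"
    by (rule VP.dim_image_eq_if_inj_on_span[OF linear_codeword])
  then have "VS.dim D = VS.dim ?D"
    by (simp only: image)
  with Gs have "Gs \<in> PR_families m d (VS.dim D)"
    by (auto simp: PR_families_def)
  moreover have "D = codeword m d R ` VS.span Gs"
    using image span by simp
  ultimately show ?thesis
    by (rule that)
qed

lemma subcode_supports:
  assumes R: "rep_system m R" and "d \<ge> 1"
  shows "{card (Supp D) | D. D \<subseteq> PRM d m R \<and> VS.subspace D \<and> VS.dim D = r}
       = (\<lambda>Gs. card R - card (common_zeros m d R Gs)) ` PR_families m d r"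
proof -
  have "R \<subseteq> aff_vecs m"
    using R by (auto simp: rep_system_def)
  then have "finite R"
    using finite_aff_vecs by (rule finite_subset)
  then have card_Supp: "card (Supp (codeword m d R ` VS.span Gs)) = card R - card (common_zeros m d R Gs)"
    for Gs :: "((nat \<Rightarrow> nat) \<Rightarrow> 'a) set"
    unfolding Supp_codeword_span
    by (intro card_Diff_subset) (auto simp: common_zeros_def intro: finite_subset[OF _ \<open>finite R\<close>])
  show ?thesis
  proof (intro equalityI subsetI)
    fix x
    assume "x \<in> {card (Supp D) | D. D \<subseteq> PRM d m R \<and> VS.subspace D \<and> VS.dim D = r}"
    then obtain D where D: "D \<subseteq> PRM d m R" "VS.subspace D" "VS.dim D = r" "x = card (Supp D)"
      by blast
    obtain Gs where Gs: "Gs \<in> PR_families m d r" "D = codeword m d R ` VS.span Gs"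
      using PR_family_of_subcode[OF R \<open>d \<ge> 1\<close> D(1,2)] unfolding D(3) .
    then have "x = card R - card (common_zeros m d R Gs)"
      using D(4) card_Supp by simp
    then show "x \<in> (\<lambda>Gs. card R - card (common_zeros m d R Gs)) ` PR_families m d r"
      using Gs(1) by (rule image_eqI)
  next
    fix x
    assume "x \<in> (\<lambda>Gs. card R - card (common_zeros m d R Gs)) ` PR_families m d r"
    then obtain Gs where Gs: "Gs \<in> PR_families m d r" "x = card R - card (common_zeros m d R Gs)"
      by blast
    let ?D = "codeword m d R ` VS.span Gs"
    have "?D \<subseteq> PRM d m R \<and> VS.subspace ?D \<and> VS.dim ?D = r"
      using subcode_of_PR_family[OF R \<open>d \<ge> 1\<close> Gs(1)] by blast
    moreover have "x = card (Supp ?D)"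
      using Gs(2) card_Supp by simp
    ultimately show "x \<in> {card (Supp D) | D. D \<subseteq> PRM d m R \<and> VS.subspace D \<and> VS.dim D = r}"
      by blast
  qed
qed

lemma e_bar_eq_Max_common_zeros:
  assumes "rep_system m R"
  shows "e_bar TYPE('a) r d m
       = Max ((\<lambda>Gs. card (common_zeros m d R Gs))
           ` (PR_families m d r :: ((nat \<Rightarrow> nat) \<Rightarrow> 'a::{finite,field}) set set))"
proof -
  let ?zeros = "\<lambda>Gs. card {L \<in> proj_points m. \<forall>G\<in>Gs. \<forall>v\<in>L. eval_poly m G v = (0::'a)}"
  have "e_bar TYPE('a) r d m = Max (?zeros ` PR_families m d r)"
    unfolding e_bar_def PR_families_def by (intro arg_cong[where f = Max]) auto
  also have "?zeros ` PR_families m d r = (\<lambda>Gs. card (common_zeros m d R Gs)) ` PR_families m d r"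
  proof (rule image_cong[OF refl])
    fix Gs :: "((nat \<Rightarrow> nat) \<Rightarrow> 'a) set"
    assume "Gs \<in> PR_families m d r"
    then show "?zeros Gs = card (common_zeros m d R Gs)"
      using PR_hom_polys_subset by (intro card_proj_common_zeros[OF assms]) (auto simp: PR_families_def)
  qed
  finally show ?thesis .
qed

theorem lemma6p2:
  fixes R :: "(nat \<Rightarrow> 'a::{finite,field}) set" and m d r :: nat
  assumes "m \<ge> 1"
    and "rep_system m R"
    and "d \<ge> 1"
    and "1 \<le> r"
    and "r \<le> (m + d choose d) - r_d TYPE('a) m d"
  shows "gen_hamming_weight (PRM d m R) r = p_m CARD('a) m - e_bar TYPE('a) r d m"
proof -
  let ?zeros = "\<lambda>Gs. card (common_zeros m d R Gs)"
  have "gen_hamming_weight (PRM d m R) r = Min ((\<lambda>Gs. card R - ?zeros Gs) ` PR_families m d r)"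
    unfolding gen_hamming_weight_def subcode_supports[OF assms(2,3)] ..
  also have "\<dots> = card R - Max (?zeros ` PR_families m d r)"
    using finite_PR_families PR_families_nonempty[OF assms(5)] by (rule Min_diff_image_eq)
  also have "\<dots> = p_m CARD('a) m - e_bar TYPE('a) r d m"
    using card_rep_system[OF assms(2)] e_bar_eq_Max_common_zeros[OF assms(2)] by simp
  finally show ?thesis .
qed

end
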